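(* Let $R>1$ and, in the upper half-plane model, let $\ell$ have endpoints $\pm R^{-1}$ (transversely oriented towards $0$) and $\ell'$ have endpoints $\pm R$ (transversely oriented towards $\infty$). For $\epsilon\in\{1,-1\}$ and $t\in\mathbb{R}$ let $$P_\epsilon(t)=\begin{bmatrix}1-t & -\epsilon R^{-1}t\\ \epsilon Rt & 1+t\end{bmatrix},\qquad P'_\epsilon(t)=\begin{bmatrix}1+t & -\epsilon Rt\\ \epsilon R^{-1}t & 1-t\end{bmatrix}\in G_0.$$ Let $h\in G_0$ be represented by $\begin{pmatrix}a&b\\c&d\end{pmatrix}$ with $ad-bc=1$, and suppose $|aR+\varepsilon' b+\varepsilon c+\varepsilon\varepsilon' dR^{-1}|<|R+\varepsilon\varepsilon' R^{-1}|$ for all $\varepsilon,\varepsilon'\in\{1,-1\}$, and that $h$ is not represented by a diagonal matrix. Then at least one of the following holds: one of the curves $(hP'_+(t))_{t>0}$, $(hP'_-(t))_{t>0}$ intersects $\mathsf{SQ}(\ell)$ transversely, or one of the curves $(P_+(t)^{-1}h)_{t>0}$, $(P_-(t)^{-1}h)_{t>0}$ intersects $\mathsf{SQ}(\ell')^{-1}$ transversely.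
   Context: $G_0=\mathrm{PSL}_2(\mathbb{R})$ (a $3$-manifold, identified with $\mathrm{AdS}^3$) acts on the upper half-plane by Möbius transformations; $[\cdot]$ denotes the class of a matrix. For a transversely oriented geodesic line $\ell$, the stem quadrant $\mathsf{SQ}(\ell)\subset G_0$ is the set of hyperbolic elements whose translation axis is orthogonal to $\ell$ and which translate towards the positive side of $\ell$; it is a $2$-dimensional surface in $G_0$. $\mathsf{SQ}(\ell')^{-1}=\{h^{-1}:h\in\mathsf{SQ}(\ell')\}$. Transverse intersection is meant in the sense of a curve meeting a surface transversely in $G_0$. *)

theory Defs
  imports "HOL-Analysis.Analysis"
begin

text \<open>Elements of PSL(2,R) are represented by matrices in SL(2,R) (type real^2^2,
  determinant 1).  Subsets of PSL(2,R) are represented by their (sign-symmetric)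
  preimages in SL(2,R); a curve in PSL(2,R) by a lift to SL(2,R).
  Points of the boundary RP^1 = R \<union> {\<infinity>} of the upper half-plane are represented by
  nonzero column vectors (x,y) (standing for x/y), and a matrix acts on them by
  matrix-vector multiplication (this is the Moebius action).\<close>

type_synonym mat2 = "real^2^2"

definition mk2 :: "real \<Rightarrow> real \<Rightarrow> real \<Rightarrow> real \<Rightarrow> mat2" where
  "mk2 a b c d = vector [vector [a, b], vector [c, d]]"

definition SL2 :: "mat2 set" where
  "SL2 = {A. det A = 1}"

definition tr2 :: "mat2 \<Rightarrow> real" where
  "tr2 A = A$1$1 + A$2$2"

definition hyperbolic :: "mat2 \<Rightarrow> bool" where
  "hyperbolic A \<longleftrightarrow> det A = 1 \<and> \<bar>tr2 A\<bar> > 2"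

definition eigvec :: "mat2 \<Rightarrow> real^2 \<Rightarrow> real \<Rightarrow> bool" where
  "eigvec A v lam \<longleftrightarrow> v \<noteq> 0 \<and> A *v v = lam *s v"

text \<open>For a hyperbolic element, the attracting (resp. repelling) fixed point on the
  boundary is the eigenline of the eigenvalue of absolute value > 1 (resp. < 1); the
  translation axis is the geodesic joining them, oriented from repelling to attracting.\<close>

definition br :: "real^2 \<Rightarrow> real^2 \<Rightarrow> real" where
  "br x y = x$1 * y$2 - x$2 * y$1"

text \<open>Two geodesics with endpoint pairs {p,q} and {u,v} meet orthogonally iff the
  endpoint pairs are harmonic (cross-ratio -1).\<close>
definition harmonic :: "real^2 \<Rightarrow> real^2 \<Rightarrow> real^2 \<Rightarrow> real^2 \<Rightarrow> bool" where
  "harmonic p q u v \<longleftrightarrow> br p u * br q v + br p v * br q u = 0"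

text \<open>A transversely oriented geodesic is given by its endpoints u, v and the set Pos
  of boundary points lying on its positive side.  The stem quadrant: hyperbolic
  elements whose axis is orthogonal to the geodesic and whose attracting fixed point
  lies on the positive side.\<close>
definition stem_quadrant :: "real^2 \<Rightarrow> real^2 \<Rightarrow> (real^2 \<Rightarrow> bool) \<Rightarrow> mat2 set" where
  "stem_quadrant u v Pos = {A. hyperbolic A \<and>
     (\<exists>p q lp lq. eigvec A p lp \<and> eigvec A q lq \<and> \<bar>lp\<bar> > 1 \<and> \<bar>lq\<bar> < 1 \<and>
        harmonic p q u v \<and> Pos p)}"

text \<open>ell: endpoints -1/R, 1/R, positive side towards 0.\<close>
definition SQ_ell :: "real \<Rightarrow> mat2 set" where
  "SQ_ell R = stem_quadrant (vector [-1/R, 1]) (vector [1/R, 1])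
      (\<lambda>p. R * \<bar>p$1\<bar> < \<bar>p$2\<bar>)"

text \<open>ell': endpoints -R, R, positive side towards infinity.\<close>
definition SQ_ell' :: "real \<Rightarrow> mat2 set" where
  "SQ_ell' R = stem_quadrant (vector [-R, 1]) (vector [R, 1])
      (\<lambda>p. \<bar>p$1\<bar> > R * \<bar>p$2\<bar>)"

definition set_inv :: "mat2 set \<Rightarrow> mat2 set" where
  "set_inv S = matrix_inv ` S"

definition Pmat :: "real \<Rightarrow> real \<Rightarrow> real \<Rightarrow> mat2" where
  "Pmat R e t = mk2 (1 - t) (- e * t / R) (e * R * t) (1 + t)"

definition Pmat' :: "real \<Rightarrow> real \<Rightarrow> real \<Rightarrow> mat2" where
  "Pmat' R e t = mk2 (1 + t) (- e * R * t) (e * t / R) (1 - t)"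

text \<open>Tangent vectors to a subset S at p: velocities at 0 of curves lying in S and
  passing through p at time 0 (for an embedded submanifold this is its tangent space).\<close>
definition tangent_vectors :: "mat2 set \<Rightarrow> mat2 \<Rightarrow> mat2 set" where
  "tangent_vectors S p = {w. \<exists>c. (\<forall>s. c s \<in> S) \<and> c 0 = p \<and>
       (c has_vector_derivative w) (at 0)}"

definition meets_transversely :: "(real \<Rightarrow> mat2) \<Rightarrow> real set \<Rightarrow> mat2 set \<Rightarrow> bool" where
  "meets_transversely gamma I S \<longleftrightarrow>
     (\<exists>t\<in>I. gamma t \<in> S \<and>
        (\<exists>w. (gamma has_vector_derivative w) (at t) \<and> w \<notin> tangent_vectors S (gamma t)))"

end

theory Submission
  imports Defs
begin

text \<open>
  A hyperbolic element whose axis is orthogonal to a geodesic with endpoints u, v satisfies a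
  linear equation in its entries; for SQ(ell) this is A21 + R^2 A12 = 0.  Since
  P'(t) = I + t N with N nilpotent, every curve h P'(t) is an affine line in the matrix
  space, so it meets this hyperplane exactly once and transversely as soon as it is not
  parallel to it.  At the crossing point the hypotheses on h make the trace exceed 2 in
  absolute value and put the attracting fixed point on the positive side of ell, so the point
  lies in SQ(ell).  The crossing time is positive for one of the two signs unless
  h21 + R^2 h12 = 0; this sign argument uses only the determinant and the box bounds on h.
  In the remaining case the transpose of h does not lie on the hyperplane.  Because
  transposition equals inversion followed by conjugation with z \<mapsto> -1/z, which exchanges
  ell and ell', it maps SQ(ell) onto SQ(ell')^-1 and the curves h^T P'(t) onto the
  curves P(t)^-1 h, giving the second alternative.
\<close>

lemma mk2_nth [simp]:
  "mk2 a b c d $ 1 $ 1 = a" "mk2 a b c d $ 1 $ 2 = b"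
  "mk2 a b c d $ 2 $ 1 = c" "mk2 a b c d $ 2 $ 2 = d"
  by (simp_all add: mk2_def)

lemma mat2_eq_iff:
  "(A::mat2) = B \<longleftrightarrow> A$1$1 = B$1$1 \<and> A$1$2 = B$1$2 \<and> A$2$1 = B$2$1 \<and> A$2$2 = B$2$2"
  by (auto simp: vec_eq_iff forall_2)

lemma vec2_eq_iff: "(p::real^2) = q \<longleftrightarrow> p$1 = q$1 \<and> p$2 = q$2"
  by (auto simp: vec_eq_iff forall_2)

lemma mk2_mult_mk2:
  "mk2 a b c d ** mk2 a' b' c' d' =
   mk2 (a*a' + b*c') (a*b' + b*d') (c*a' + d*c') (c*b' + d*d')"
  by (simp add: mat2_eq_iff matrix_matrix_mult_def sum_2)

lemma mk2_add_scaleR: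
  "mk2 a b c d + t *\<^sub>R mk2 a' b' c' d' = mk2 (a + t*a') (b + t*b') (c + t*c') (d + t*d')"
  by (simp add: mat2_eq_iff)

lemma transpose_mk2: "transpose (mk2 a b c d) = mk2 a c b d"
  by (simp add: mat2_eq_iff transpose_def)

lemma det_mk2: "det (mk2 a b c d) = a*d - b*c"
  by (simp add: det_2)

lemma mat2_vec_mult_nth [simp]:
  "((A::mat2) *v p) $ 1 = A$1$1 * p$1 + A$1$2 * p$2"
  "((A::mat2) *v p) $ 2 = A$2$1 * p$1 + A$2$2 * p$2"
  by (simp_all add: matrix_vector_mult_def sum_2)

lemma matrix_inv_unique:
  fixes A B :: "'a::comm_ring_1^'n^'n"
  assumes "A ** B = mat 1" "B ** A = mat 1"
  shows "matrix_inv A = B"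
proof -
  have "\<exists>A'. A ** A' = mat 1 \<and> A' ** A = mat 1" using assms by blast
  then have C: "A ** matrix_inv A = mat 1 \<and> matrix_inv A ** A = mat 1"
    unfolding matrix_inv_def by (rule someI_ex)
  have "matrix_inv A = matrix_inv A ** (A ** B)" using assms by (simp add: matrix_mul_rid)
  also have "\<dots> = B" using C by (simp add: matrix_mul_assoc matrix_mul_lid)
  finally show ?thesis .
qed

lemma matrix_inv_SL2:
  assumes "det (A::mat2) = 1"
  shows "matrix_inv A = mk2 (A$2$2) (- A$1$2) (- A$2$1) (A$1$1)"
  using assms
  by (intro matrix_inv_unique)
     (simp_all add: det_2 mat2_eq_iff matrix_matrix_mult_def sum_2 mat_def algebra_simps)

lemma matrix_inv_Pmat:
  assumes "e * e = 1" "R \<noteq> 0"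
  shows "matrix_inv (Pmat R e t) = transpose (Pmat' R e t)"
proof -
  have "det (Pmat R e t) = 1 + (e*e - 1) * t^2"
    using \<open>R \<noteq> 0\<close> by (simp add: Pmat_def det_mk2 field_simps power2_eq_square)
  with assms show ?thesis
    by (simp add: matrix_inv_SL2 Pmat_def Pmat'_def transpose_mk2)
qed

lemma eigvecD:
  assumes "eigvec (A::mat2) p l"
  shows "A$1$1 * p$1 + A$1$2 * p$2 = l * p$1" "A$2$1 * p$1 + A$2$2 * p$2 = l * p$2"
    "p$1 \<noteq> 0 \<or> p$2 \<noteq> 0"
  using assms by (auto simp: eigvec_def vec2_eq_iff)

lemma eigvec_char_poly:
  assumes "eigvec (A::mat2) p l"
  shows "l^2 - tr2 A * l + det A = 0"
proof -
  note E = eigvecD[OF assms]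
  have "(l^2 - tr2 A * l + det A) * p$1 = 0" "(l^2 - tr2 A * l + det A) * p$2 = 0"
    using E(1,2) by (simp_all add: tr2_def det_2 algebra_simps power2_eq_square, algebra+)
  then show ?thesis using E(3) by auto
qed

lemma eigvec_exists_of_char_root:
  assumes "l^2 - tr2 A * l + det (A::mat2) = 0"
  shows "\<exists>p. eigvec A p l"
proof -
  have char: "(A$1$1 - l) * (A$2$2 - l) = A$1$2 * A$2$1"
    using assms by (simp add: tr2_def det_2 algebra_simps power2_eq_square)
  consider "A$1$2 \<noteq> 0 \<or> l \<noteq> A$1$1" | "A$2$1 \<noteq> 0 \<or> l \<noteq> A$2$2"
    | "A$1$2 = 0" "A$2$1 = 0" "A$1$1 = l" "A$2$2 = l" by argo
  then show ?thesis
  proof cases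
    case 1
    then have "eigvec A (vector [A$1$2, l - A$1$1]) l"
      using char by (auto simp: eigvec_def vec2_eq_iff algebra_simps)
    then show ?thesis ..
  next
    case 2
    then have "eigvec A (vector [l - A$2$2, A$2$1]) l"
      using char by (auto simp: eigvec_def vec2_eq_iff algebra_simps)
    then show ?thesis ..
  next
    case 3
    then have "eigvec A (vector [1, 0]) l" by (simp add: eigvec_def vec2_eq_iff)
    then show ?thesis ..
  qed
qed

lemma br_eigvec_neq_0:
  assumes p: "eigvec (A::mat2) p lp" and q: "eigvec A q lq" and "lp \<noteq> lq"
  shows "br p q \<noteq> 0"
proof
  assume "br p q = 0"
  note P = eigvecD[OF p] and Q = eigvecD[OF q]
  have "(lp - lq) * (p$1 * q$1) = - A$1$2 * br p q" "(lp - lq) * (p$2 * q$2) = A$2$1 * br p q"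
    using P(1,2) Q(1,2) by (simp_all add: br_def algebra_simps, algebra+)
  then have "p$1 * q$1 = 0" "p$2 * q$2 = 0" using \<open>br p q = 0\<close> \<open>lp \<noteq> lq\<close> by simp_all
  with \<open>br p q = 0\<close> P(3) Q(3) show False by (auto simp: br_def)
qed

text \<open>For hyperbolic A this form vanishes iff the axis of A is orthogonal to the geodesic
  with endpoints u and v.\<close>
definition orthogonality_form :: "real^2 \<Rightarrow> real^2 \<Rightarrow> mat2 \<Rightarrow> real" where
  "orthogonality_form u v A = br u (A *v v) + br v (A *v u)"

lemma harmonic_iff_orthogonality_form:
  assumes p: "eigvec (A::mat2) p lp" and q: "eigvec A q lq" and "lp \<noteq> lq"
  shows "harmonic p q u v \<longleftrightarrow> orthogonality_form u v A = 0"
proof -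
  note P = eigvecD[OF p] and Q = eigvecD[OF q]
  have "br p q * orthogonality_form u v A =
        (lp - lq) * (br p u * br q v + br p v * br q u)"
    using P(1,2) Q(1,2) by (simp add: orthogonality_form_def br_def) algebra
  then show ?thesis
    using br_eigvec_neq_0[OF assms] \<open>lp \<noteq> lq\<close> by (auto simp: harmonic_def)
qed

lemma stem_quadrant_orthogonality_form:
  assumes "A \<in> stem_quadrant u v Pos"
  shows "orthogonality_form u v A = 0"
proof -
  obtain p q lp lq where "eigvec A p lp" "eigvec A q lq" "\<bar>lp\<bar> > 1" "\<bar>lq\<bar> < 1"
    "harmonic p q u v"
    using assms by (auto simp: stem_quadrant_def)
  then show ?thesis using harmonic_iff_orthogonality_form[of A p lp q lq] by auto
qed

lemma stem_quadrantI:
  assumes hyp: "hyperbolic A" and p: "eigvec A p l" and l: "\<bar>l\<bar> > 1" and "Pos p"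
    and orth: "orthogonality_form u v A = 0"
  shows "A \<in> stem_quadrant u v Pos"
proof -
  define l' where "l' = tr2 A - l"
  have "det A = 1" using hyp by (simp add: hyperbolic_def)
  with eigvec_char_poly[OF p] have root: "l^2 - tr2 A * l + 1 = 0" by simp
  then have "l'^2 - tr2 A * l' + det A = 0" "l * l' = 1"
    using \<open>det A = 1\<close> by (simp_all add: l'_def algebra_simps power2_eq_square)
  then obtain q where q: "eigvec A q l'" using eigvec_exists_of_char_root by blast
  have "\<bar>l'\<bar> = 1 / \<bar>l\<bar>" using \<open>l * l' = 1\<close> l
    by (simp add: field_simps flip: abs_mult)
  then have l': "\<bar>l'\<bar> < 1" using l by simp
  have "harmonic p q u v"
    using harmonic_iff_orthogonality_form[OF p q] orth l l' by auto
  then show ?thesis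
    unfolding stem_quadrant_def using hyp p q l l' \<open>Pos p\<close> by blast
qed

lemma eigvec_conj:
  assumes inv: "M' ** M = mat 1" and "eigvec A p l"
  shows "eigvec (M ** A ** M') (M *v p) l"
proof -
  have "M' *v (M *v p) = p" by (simp add: matrix_vector_mul_assoc inv)
  then have "M *v p \<noteq> 0" using assms(2) by (auto simp: eigvec_def)
  moreover have "(M ** A ** M') *v (M *v p) = M *v (A *v p)"
    by (metis inv matrix_vector_mul_assoc matrix_mul_assoc matrix_vector_mul_lid)
  ultimately show ?thesis using assms(2) by (simp add: eigvec_def vector_scalar_commute)
qed

lemma br_mult: "br ((M::mat2) *v x) (M *v y) = det M * br x y"
  by (simp add: br_def det_2 algebra_simps)

lemma hyperbolic_conj:
  assumes inv: "M' ** M = mat (1::real)" and "hyperbolic A"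
  shows "hyperbolic (M ** A ** M')"
proof -
  have tr2_trace: "tr2 B = trace B" for B :: mat2 by (simp add: tr2_def trace_def sum_2)
  have "det M' * det M = 1" using inv by (metis det_mul det_I)
  then have "det (M ** A ** M') = det A" by (simp add: det_mul algebra_simps)
  moreover have "trace (M ** A ** M') = trace A"
    by (metis inv trace_mul_sym matrix_mul_assoc matrix_mul_lid)
  ultimately show ?thesis using assms(2) by (simp add: hyperbolic_def tr2_trace)
qed

lemma stem_quadrant_conj:
  assumes inv: "M' ** M = mat 1" and "A \<in> stem_quadrant u v Pos"
  shows "M ** A ** M' \<in> stem_quadrant (M *v u) (M *v v) (\<lambda>x. Pos (M' *v x))"
proof -
  obtain p q lp lq where "hyperbolic A" "eigvec A p lp" "eigvec A q lq" "\<bar>lp\<bar> > 1"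
    "\<bar>lq\<bar> < 1" "harmonic p q u v" "Pos p"
    using assms(2) by (auto simp: stem_quadrant_def)
  moreover have "harmonic (M *v p) (M *v q) (M *v u) (M *v v)"
    using \<open>harmonic p q u v\<close> by (simp add: harmonic_def br_mult) algebra
  moreover have "M' *v (M *v p) = p" by (simp add: matrix_vector_mul_assoc inv)
  ultimately show ?thesis
    unfolding stem_quadrant_def using hyperbolic_conj eigvec_conj inv by fastforce
qed

lemma stem_quadrant_scale:
  assumes "k \<noteq> 0" "m \<noteq> 0"
  shows "stem_quadrant (k *s u) (m *s v) Pos = stem_quadrant u v Pos"
proof -
  have "br p (k *s u) * br q (m *s v) + br p (m *s v) * br q (k *s u)
        = k * m * (br p u * br q v + br p v * br q u)" for p q
    by (simp add: br_def algebra_simps)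
  then have "harmonic p q (k *s u) (m *s v) \<longleftrightarrow> harmonic p q u v" for p q
    using assms by (simp add: harmonic_def)
  then show ?thesis by (simp add: stem_quadrant_def)
qed

lemma stem_quadrant_swap: "stem_quadrant v u Pos = stem_quadrant u v Pos"
  by (simp add: stem_quadrant_def harmonic_def add.commute)

lemma orthogonality_form_ell:
  assumes "R \<noteq> 0"
  shows "orthogonality_form (vector [-1/R, 1]) (vector [1/R, 1]) A = - 2 / R^2 * (A$2$1 + R^2 * A$1$2)"
  using assms by (simp add: orthogonality_form_def br_def field_simps power2_eq_square)

lemma SQ_ell_hyperplane:
  assumes "R \<noteq> 0" "A \<in> SQ_ell R"
  shows "A$2$1 + R^2 * A$1$2 = 0"
proof -
  have "orthogonality_form (vector [-1/R, 1]) (vector [1/R, 1]) A = 0"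
    using assms(2) unfolding SQ_ell_def by (rule stem_quadrant_orthogonality_form)
  then have "- 2 / R^2 * (A$2$1 + R^2 * A$1$2) = 0"
    by (simp only: orthogonality_form_ell[OF assms(1)])
  then show ?thesis using assms(1) by simp
qed

lemma eigvec_positive_side:
  assumes p: "eigvec A p l" and bound: "R * \<bar>A$1$2\<bar> < \<bar>l - A$1$1\<bar>"
  shows "R * \<bar>p$1\<bar> < \<bar>p$2\<bar>"
proof (cases "p$1 = 0")
  case True
  then show ?thesis using eigvecD(3)[OF p] by simp
next
  case False
  have "A$1$2 * p$2 = (l - A$1$1) * p$1" using eigvecD(1)[OF p] by (simp add: algebra_simps)
  then have "\<bar>A$1$2\<bar> * \<bar>p$2\<bar> = \<bar>l - A$1$1\<bar> * \<bar>p$1\<bar>" by (metis abs_mult)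
  also have "\<dots> > R * \<bar>A$1$2\<bar> * \<bar>p$1\<bar>" using bound False by simp
  finally have "\<bar>A$1$2\<bar> * (\<bar>p$2\<bar> - R * \<bar>p$1\<bar>) > 0" by (simp add: algebra_simps)
  then show ?thesis by (simp add: zero_less_mult_iff)
qed

lemma SQ_ell_memberI:
  assumes R: "R > 0" and det: "al*de - be*ga = 1" and ga: "ga = - (R^2 * be)"
    and sep: "(al - de)^2 > 4 * R^2 * be^2" and side: "de^2 > al^2"
  shows "mk2 al be ga de \<in> SQ_ell R"
proof -
  define T where "T = al + de"
  define r where "r = sqrt (T^2 - 4)"
  define l where "l = (T + sgn T * r) / 2"
  have "T^2 - 4 = (al - de)^2 - 4 * R^2 * be^2"
    using det ga by (simp add: T_def algebra_simps power2_eq_square)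
  then have "T^2 > 4" using sep by simp
  then have r: "r > 0" "r^2 = T^2 - 4" by (simp_all add: r_def)
  have "\<bar>T\<bar> > 2" using \<open>T^2 > 4\<close> abs_le_square_iff[of T 2] by simp
  have "T * (de - al) > 0" using side by (simp add: T_def algebra_simps power2_eq_square)
  then have sgn: "sgn T * T = \<bar>T\<bar>" "sgn T * (de - al) = \<bar>de - al\<bar>" "sgn T * sgn T = 1"
    by (auto simp: sgn_real_def zero_less_mult_iff)
  have hyp: "hyperbolic (mk2 al be ga de)"
    using det \<open>\<bar>T\<bar> > 2\<close> by (simp add: hyperbolic_def tr2_def det_mk2 T_def)
  have "l^2 - T * l + 1 = ((sgn T * sgn T) * r^2 - T^2 + 4) / 4"
    by (simp add: l_def field_simps power2_eq_square)
  then have "l^2 - tr2 (mk2 al be ga de) * l + det (mk2 al be ga de) = 0"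
    using sgn(3) r(2) det by (simp add: tr2_def det_mk2 T_def)
  then obtain p where p: "eigvec (mk2 al be ga de) p l" using eigvec_exists_of_char_root by blast
  have sgn_sgn: "sgn T * (sgn T * x) = x" for x by (metis sgn(3) mult.assoc mult_1)
  have l_eq: "l = sgn T * ((sgn T * T + r) / 2)"
    by (simp add: distrib_left sgn_sgn l_def)
  have "l - al = sgn T * ((sgn T * (T - 2 * al) + r) / 2)"
    using \<open>\<bar>T\<bar> > 2\<close> by (simp add: distrib_left sgn_sgn) (simp add: l_def field_simps)
  moreover have "T - 2 * al = de - al" by (simp add: T_def)
  ultimately have l_al_eq: "l - al = sgn T * ((sgn T * (de - al) + r) / 2)" by (simp only:)
  have "\<bar>l\<bar> = \<bar>sgn T\<bar> * \<bar>(sgn T * T + r) / 2\<bar>"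
      "\<bar>l - al\<bar> = \<bar>sgn T\<bar> * \<bar>(sgn T * (de - al) + r) / 2\<bar>"
    by (subst l_eq l_al_eq, rule abs_mult)+
  then have "\<bar>l\<bar> = (\<bar>T\<bar> + r) / 2" "\<bar>l - al\<bar> = (\<bar>de - al\<bar> + r) / 2"
    using r(1) sgn(1,2) \<open>\<bar>T\<bar> > 2\<close> by (simp_all add: abs_sgn_eq, linarith)
  moreover have "\<bar>de - al\<bar> > \<bar>2 * R * be\<bar>"
    using sep abs_le_square_iff[of "de - al" "2 * R * be"]
    by (simp add: power_mult_distrib power2_commute)
  then have "\<bar>de - al\<bar> > 2 * R * \<bar>be\<bar>" using R by (simp add: abs_mult)
  ultimately have "\<bar>l\<bar> > 1" "R * \<bar>be\<bar> < \<bar>l - al\<bar>" using \<open>\<bar>T\<bar> > 2\<close> r(1) by simp_all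
  moreover have "R * \<bar>p$1\<bar> < \<bar>p$2\<bar>"
    using eigvec_positive_side[OF p] \<open>R * \<bar>be\<bar> < \<bar>l - al\<bar>\<close> by simp
  moreover have "orthogonality_form (vector [-1/R, 1]) (vector [1/R, 1]) (mk2 al be ga de) = 0"
    using R ga orthogonality_form_ell[of R "mk2 al be ga de"] by simp
  ultimately show ?thesis
    unfolding SQ_ell_def by (intro stem_quadrantI[OF hyp p]) auto
qed

text \<open>The Moebius map z \<mapsto> -1/z; it maps ell' with its transverse orientation onto ell.\<close>
definition half_turn :: mat2 where
  "half_turn = mk2 0 1 (-1) 0"

lemma half_turn_orthogonal:
  "transpose half_turn ** half_turn = mat 1" "half_turn ** transpose half_turn = mat 1"
  by (simp_all add: half_turn_def transpose_mk2 mk2_mult_mk2 mat2_eq_iff mat_def)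

lemma transpose_matrix_inv_SL2:
  assumes "det A = 1"
  shows "transpose (matrix_inv A) = half_turn ** A ** transpose half_turn"
  using assms
  by (simp add: matrix_inv_SL2 half_turn_def transpose_mk2 mat2_eq_iff matrix_matrix_mult_def sum_2
      transpose_def)

lemma SQ_ell'_half_turn:
  assumes R: "R > 0" and A: "A \<in> SQ_ell' R"
  shows "half_turn ** A ** transpose half_turn \<in> SQ_ell R"
proof -
  have "half_turn *v vector [-R, 1] = R *s vector [1/R, 1]"
       "half_turn *v vector [R, 1] = (-R) *s vector [-1/R, 1]"
    using R by (simp_all add: half_turn_def vec2_eq_iff)
  moreover have "(\<lambda>x. \<bar>(transpose half_turn *v x)$1\<bar> > R * \<bar>(transpose half_turn *v x)$2\<bar>)
      = (\<lambda>p. R * \<bar>p$1\<bar> < \<bar>p$2\<bar>)"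
    by (simp add: half_turn_def transpose_mk2)
  moreover note stem_quadrant_conj[OF half_turn_orthogonal(1) A[unfolded SQ_ell'_def]]
  ultimately have "half_turn ** A ** transpose half_turn
      \<in> stem_quadrant (R *s vector [1/R, 1]) ((-R) *s vector [-1/R, 1]) (\<lambda>p. R * \<bar>p$1\<bar> < \<bar>p$2\<bar>)"
    by (simp only:)
  moreover have "R \<noteq> 0" "-R \<noteq> 0" using R by simp_all
  ultimately show ?thesis
    by (simp only: SQ_ell_def stem_quadrant_scale stem_quadrant_swap[of "vector [1/R, 1]"]
        not_False_eq_True)
qed

lemma SQ_ell_half_turn:
  assumes R: "R > 0" and B: "B \<in> SQ_ell R"
  shows "transpose half_turn ** B ** half_turn \<in> SQ_ell' R"
proof -
  have "transpose half_turn *v vector [-1/R, 1] = (-1/R) *s vector [R, 1]"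
       "transpose half_turn *v vector [1/R, 1] = (1/R) *s vector [-R, 1]"
    using R by (simp_all add: half_turn_def transpose_mk2 vec2_eq_iff)
  moreover have "(\<lambda>x. R * \<bar>(half_turn *v x)$1\<bar> < \<bar>(half_turn *v x)$2\<bar>)
      = (\<lambda>p. \<bar>p$1\<bar> > R * \<bar>p$2\<bar>)"
    by (simp add: half_turn_def)
  moreover note stem_quadrant_conj[OF half_turn_orthogonal(2) B[unfolded SQ_ell_def]]
  ultimately have "transpose half_turn ** B ** half_turn
      \<in> stem_quadrant ((-1/R) *s vector [R, 1]) ((1/R) *s vector [-R, 1]) (\<lambda>p. \<bar>p$1\<bar> > R * \<bar>p$2\<bar>)"
    by (simp only:)
  moreover have "-1/R \<noteq> 0" "1/R \<noteq> 0" using R by simp_all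
  ultimately show ?thesis
    by (simp only: SQ_ell'_def stem_quadrant_scale stem_quadrant_swap[of "vector [R, 1]"]
        not_False_eq_True)
qed

lemma set_inv_SQ_ell':
  assumes "R > 0"
  shows "set_inv (SQ_ell' R) = transpose ` SQ_ell R"
proof (intro equalityI subsetI)
  fix N assume "N \<in> set_inv (SQ_ell' R)"
  then obtain A where A: "A \<in> SQ_ell' R" and N: "N = matrix_inv A" by (auto simp: set_inv_def)
  have "det A = 1" using A by (simp add: SQ_ell'_def stem_quadrant_def hyperbolic_def)
  then have "N = transpose (half_turn ** A ** transpose half_turn)"
    by (simp add: N flip: transpose_matrix_inv_SL2)
  then show "N \<in> transpose ` SQ_ell R" using SQ_ell'_half_turn[OF assms A] by blast
next
  fix N assume "N \<in> transpose ` SQ_ell R"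
  then obtain B where B: "B \<in> SQ_ell R" and N: "N = transpose B" by blast
  define A where "A = transpose half_turn ** B ** half_turn"
  have A: "A \<in> SQ_ell' R" using SQ_ell_half_turn[OF assms B] by (simp add: A_def)
  then have "det A = 1" by (simp add: SQ_ell'_def stem_quadrant_def hyperbolic_def)
  moreover have "half_turn ** A ** transpose half_turn
      = (half_turn ** transpose half_turn) ** B ** (half_turn ** transpose half_turn)"
    by (simp add: A_def matrix_mul_assoc)
  ultimately have "transpose (matrix_inv A) = B"
    by (simp add: transpose_matrix_inv_SL2 half_turn_orthogonal matrix_mul_lid matrix_mul_rid)
  then have "N = matrix_inv A" by (metis N transpose_transpose)
  then show "N \<in> set_inv (SQ_ell' R)" using A by (simp add: set_inv_def)
qed

lemma tangent_vectors_kernel: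
  assumes "linear f" "\<forall>x\<in>S. f x = (0::real)" "w \<in> tangent_vectors S p"
  shows "f w = 0"
proof -
  obtain c where c: "\<forall>s. c s \<in> S" "(c has_vector_derivative w) (at 0)"
    using assms(3) by (auto simp: tangent_vectors_def)
  have "((\<lambda>s. f (c s)) has_vector_derivative f w) (at 0)"
    using assms(1) c(2) by (simp add: linear_conv_bounded_linear bounded_linear.has_vector_derivative)
  moreover have "((\<lambda>s. f (c s)) has_vector_derivative 0) (at 0)"
    using assms(2) c(1) by simp
  ultimately show ?thesis by (rule vector_derivative_unique_at)
qed

lemma meets_transversely_affine:
  assumes "linear f" "\<forall>x\<in>S. f x = (0::real)" "f W \<noteq> 0" "t\<^sub>0 \<in> I" "H + t\<^sub>0 *\<^sub>R W \<in> S"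
  shows "meets_transversely (\<lambda>t. H + t *\<^sub>R W) I S"
proof -
  have "((\<lambda>t. H + t *\<^sub>R W) has_vector_derivative W) (at t\<^sub>0)"
    by (auto intro!: derivative_eq_intros)
  moreover have "W \<notin> tangent_vectors S (H + t\<^sub>0 *\<^sub>R W)"
    using tangent_vectors_kernel[OF assms(1,2)] assms(3) by blast
  ultimately show ?thesis unfolding meets_transversely_def using assms(4,5) by blast
qed

lemma meets_transversely_linear_image:
  assumes f: "linear f" and g: "linear g" and gf: "\<And>x. g (f x) = x"
    and "meets_transversely \<gamma> I S"
  shows "meets_transversely (\<lambda>t. f (\<gamma> t)) I (f ` S)"
proof -
  obtain t w where t: "t \<in> I" "\<gamma> t \<in> S" and w: "(\<gamma> has_vector_derivative w) (at t)"
    and tan: "w \<notin> tangent_vectors S (\<gamma> t)"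
    using assms(4) by (auto simp: meets_transversely_def)
  have "((\<lambda>t. f (\<gamma> t)) has_vector_derivative f w) (at t)"
    using f w by (simp add: linear_conv_bounded_linear bounded_linear.has_vector_derivative)
  moreover have "f w \<notin> tangent_vectors (f ` S) (f (\<gamma> t))"
  proof
    assume "f w \<in> tangent_vectors (f ` S) (f (\<gamma> t))"
    then obtain c where c: "\<forall>s. c s \<in> f ` S" "c 0 = f (\<gamma> t)"
      "(c has_vector_derivative f w) (at 0)"
      by (auto simp: tangent_vectors_def)
    have "((\<lambda>s. g (c s)) has_vector_derivative g (f w)) (at 0)"
      using g c(3) by (simp add: linear_conv_bounded_linear bounded_linear.has_vector_derivative)
    moreover have "\<forall>s. g (c s) \<in> S" using c(1) gf by (metis imageE)
    ultimately have "w \<in> tangent_vectors S (\<gamma> t)"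
      unfolding tangent_vectors_def using c(2) gf by (intro CollectI exI[of _ "\<lambda>s. g (c s)"]) auto
    with tan show False by contradiction
  qed
  ultimately show ?thesis unfolding meets_transversely_def using t by blast
qed

lemma box_factors_pos:
  fixes R P Q :: real
  assumes R: "R > 1" and sum: "\<bar>P + Q\<bar> < R + 1/R" and diff: "\<bar>P - Q\<bar> < R - 1/R"
  shows "(R^2 + 1)^2 - R^2 * (P + Q)^2 > 0" "(R^2 - 1)^2 - R^2 * (P - Q)^2 > 0"
    "R^4 - 1 - R^2 * (Q^2 - P^2) > 0"
proof -
  have "R * \<bar>P + Q\<bar> < R^2 + 1" "R * \<bar>P - Q\<bar> < R^2 - 1"
    using R sum diff by (simp_all add: field_simps power2_eq_square)
  then have "\<bar>R * (P + Q)\<bar> < R^2 + 1" "\<bar>R * (P - Q)\<bar> < R^2 - 1"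
    using R by (simp_all add: abs_mult)
  moreover have "R^2 - 1 > 0" using R by (simp add: one_less_power)
  ultimately have "(R * (P + Q))^2 < (R^2 + 1)^2" "(R * (P - Q))^2 < (R^2 - 1)^2"
    using power_strict_mono[of "\<bar>R * (P + Q)\<bar>" "R^2 + 1" 2]
      power_strict_mono[of "\<bar>R * (P - Q)\<bar>" "R^2 - 1" 2] by simp_all
  then show "(R^2 + 1)^2 - R^2 * (P + Q)^2 > 0" "(R^2 - 1)^2 - R^2 * (P - Q)^2 > 0"
    by (simp_all add: power_mult_distrib)
  have "R^2 * (Q^2 - P^2) = (R * (Q - P)) * (R * (Q + P))" by (simp add: algebra_simps power2_eq_square)
  also have "\<dots> \<le> \<bar>R * (P - Q)\<bar> * \<bar>R * (P + Q)\<bar>"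
    by (metis abs_ge_self abs_minus_commute abs_mult add.commute)
  also have "\<dots> < (R^2 - 1) * (R^2 + 1)"
    using \<open>\<bar>R * (P + Q)\<bar> < R^2 + 1\<close> \<open>\<bar>R * (P - Q)\<bar> < R^2 - 1\<close>
    by (intro mult_strict_mono) auto
  also have "\<dots> = R^4 - 1" by (simp add: algebra_simps power2_eq_square power4_eq_xxxx)
  finally show "R^4 - 1 - R^2 * (Q^2 - P^2) > 0" by simp
qed

lemma SQ_ell_inequalities:
  fixes R P Q s e al be de :: real
  assumes R: "R > 1" and sum: "\<bar>P + Q\<bar> < R + 1/R" and diff: "\<bar>P - Q\<bar> < R - 1/R"
    and "s \<noteq> 0" and e: "e * e = 1"
    and sal: "s * al * R = e * (1 - R^2 * P^2)" and sde: "s * de = e * R * (Q^2 - R^2)"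
    and sbe: "s * be = P * Q - 1"
  shows "(al - de)^2 > 4 * R^2 * be^2" "de^2 > al^2"
proof -
  note F = box_factors_pos[OF R sum diff]
  have "(s * R)^2 > 0" using \<open>s \<noteq> 0\<close> R by simp
  have "(s * R)^2 * ((al - de)^2 - 4 * R^2 * be^2) = (s*al*R - (s*de) * R)^2 - 4 * R^4 * (s*be)^2"
    by (simp add: algebra_simps power2_eq_square power4_eq_xxxx)
  also have "\<dots> = (e * (1 - R^2 * P^2) - e * R * (Q^2 - R^2) * R)^2 - 4 * R^4 * (P * Q - 1)^2"
    by (simp only: sal sde sbe)
  also have "\<dots> = ((R^2 + 1)^2 - R^2 * (P + Q)^2) * ((R^2 - 1)^2 - R^2 * (P - Q)^2)"
    using e by algebra
  finally have "(s * R)^2 * ((al - de)^2 - 4 * R^2 * be^2) > 0" using F(1,2) by simp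
  with \<open>(s * R)^2 > 0\<close> show "(al - de)^2 > 4 * R^2 * be^2" by (simp add: zero_less_mult_iff)
  have "(s * R)^2 * (de^2 - al^2) = R^2 * (s * de)^2 - (s * al * R)^2"
    by (simp add: algebra_simps power2_eq_square)
  also have "\<dots> = R^2 * (e * R * (Q^2 - R^2))^2 - (e * (1 - R^2 * P^2))^2"
    by (simp only: sal sde)
  also have "\<dots> = (R^4 - 1 - R^2 * (Q^2 - P^2)) *
      (((R^2 + 1)^2 - R^2 * (P + Q)^2) + ((R^2 - 1)^2 - R^2 * (P - Q)^2)) / 2"
    using e by algebra
  also have "\<dots> > 0" using F by (intro divide_pos_pos mult_pos_pos add_pos_pos) auto
  finally have "(s * R)^2 * (de^2 - al^2) > 0" .
  with \<open>(s * R)^2 > 0\<close> show "de^2 > al^2" by (simp add: zero_less_mult_iff)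
qed

lemma product_bound_of_boxes:
  fixes k x y u v :: real
  assumes k: "k > 1" and x: "x \<le> 0" and y: "0 \<le> y"
    and u: "\<bar>u - k * x\<bar> < 4" and v: "\<bar>v - k * y\<bar> < 4" and "v < u"
  shows "u * v - x * y < 16"
proof -
  define A B where "A = k * y - 4" and "B = k * x + 4"
  have "A < v" "u < B" using u v by (auto simp: A_def B_def abs_less_iff)
  then have "k * (y - x) < 8" using \<open>v < u\<close> by (simp add: A_def B_def algebra_simps)
  then have "k * (k * (y - x)) < k * 8" using k by simp
  then have kk: "k * k * (y - x) < 8 * k" by (simp add: algebra_simps)
  have "1 \<le> k * k" using k by (metis less_eq_real_def mult_le_cancel_left1 less_trans zero_less_one)
  then have "y \<le> k * k * y" "k * k * x \<le> x" using x y
    by (simp_all add: mult_le_cancel_right1 mult_le_cancel_right2)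
  have "16 + x * y - A^2 = y * (8 * k - k * k * y + x)"
    by (simp add: A_def algebra_simps power2_eq_square)
  also have "\<dots> \<ge> 0" using kk \<open>k * k * x \<le> x\<close> y by (intro mult_nonneg_nonneg) (auto simp: algebra_simps)
  finally have A2: "A^2 \<le> 16 + x * y" by simp
  have "16 + x * y - B^2 = (- x) * (8 * k + k * k * x - y)"
    by (simp add: B_def algebra_simps power2_eq_square)
  also have "\<dots> \<ge> 0" using kk \<open>y \<le> k * k * y\<close> x by (intro mult_nonneg_nonneg) (auto simp: algebra_simps)
  finally have B2: "B^2 \<le> 16 + x * y" by simp
  define M where "M = max \<bar>A\<bar> \<bar>B\<bar>"
  have "\<bar>u\<bar> < M" "\<bar>v\<bar> < M"
    using \<open>A < v\<close> \<open>u < B\<close> \<open>v < u\<close> by (auto simp: M_def abs_less_iff max_def)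
  then have "u * v < M * M"
    by (metis abs_ge_self abs_mult abs_ge_zero mult_strict_mono le_less_trans)
  also have "M * M \<le> 16 + x * y"
    using A2 B2 by (auto simp: M_def max_def power2_eq_square abs_mult_self_eq)
  finally show ?thesis by simp
qed

lemma crossing_sign_exists:
  fixes R a b c d :: real
  assumes R: "R > 1" and det: "a * d - b * c = 1"
    and plus: "\<bar>(a*R + b) - (d/R + c)\<bar> < R - 1/R" and minus: "\<bar>(a*R - b) - (d/R - c)\<bar> < R - 1/R"
    and L: "c + R^2 * b \<noteq> 0"
  shows "\<exists>e \<in> {1, -1}. (c - R^2 * b + e * (d/R - a * R^3)) * (c + R^2 * b) < 0"
proof (rule ccontr)
  assume "\<not> ?thesis"
  then have neg1: "(c - R^2 * b + 1 * (d/R - a * R^3)) * (c + R^2 * b) \<ge> 0"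
    and negm: "(c - R^2 * b + (-1) * (d/R - a * R^3)) * (c + R^2 * b) \<ge> 0"
    by (auto simp: not_less)
  have "R > 0" "R^2 - 1 > 0" using R by (simp_all add: one_less_power)
  define k where "k = (R^2 + 1) / (R^2 - 1)"
  have "k > 1" using \<open>R^2 - 1 > 0\<close> by (simp add: k_def field_simps)
  have bound: "\<bar>2 * (Q/R + R*P) - k * (2 * (R*P - Q/R))\<bar> < 4" if "\<bar>P - Q\<bar> < R - 1/R" for P Q
  proof -
    have N: "R - 1/R > 0" using \<open>R^2 - 1 > 0\<close> \<open>R > 0\<close> by (simp add: field_simps power2_eq_square)
    have "2 * (Q/R + R*P) - k * (2 * (R*P - Q/R)) = 4 * (Q - P) / (R - 1/R)"
      using \<open>R > 0\<close> \<open>R^2 - 1 > 0\<close> N by (simp add: k_def field_simps power2_eq_square)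
    also have "\<bar>\<dots>\<bar> = 4 * \<bar>Q - P\<bar> / (R - 1/R)"
      using N by (simp only: abs_divide abs_mult)
    also have "\<dots> < 4" using that N by (simp add: pos_divide_less_eq abs_minus_commute)
    finally show ?thesis .
  qed
  define P1 Q1 Pm Qm where "P1 = a*R + b" "Q1 = d/R + c" "Pm = a*R - b" "Qm = d/R - c"
  txt \<open>The crossing numerators for the two signs are -(R/2) x1 and (R/2) xm, and det h = 1
    becomes y1 ym - x1 xm = 16, which the box bounds exclude when both signs fail.\<close>
  define x1 xm y1 ym where "x1 = 2 * (R*P1 - Q1/R)" "xm = 2 * (R*Pm - Qm/R)"
    "y1 = 2 * (Q1/R + R*P1)" "ym = 2 * (Qm/R + R*Pm)"
  have box1: "\<bar>y1 - k * x1\<bar> < 4" and boxm: "\<bar>ym - k * xm\<bar> < 4"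
    using bound[OF plus] bound[OF minus] by (simp_all add: P1_Q1_Pm_Qm_def x1_xm_y1_ym_def)
  have "y1 * ym - x1 * xm = 8 * (Q1 * Pm + P1 * Qm)"
    using \<open>R > 0\<close> by (simp add: x1_xm_y1_ym_def field_simps)
  also have "Q1 * Pm + P1 * Qm = 2 * (a * d - b * c)"
    using \<open>R > 0\<close> by (simp add: P1_Q1_Pm_Qm_def field_simps)
  finally have id: "y1 * ym - x1 * xm = 16" using det by simp
  have s1: "c - R^2 * b + 1 * (d/R - a * R^3) = - (R/2) * x1"
    and sm: "c - R^2 * b + (-1) * (d/R - a * R^3) = (R/2) * xm"
    and y: "y1 - ym = 4 * (c + R^2 * b) / R"
    using \<open>R > 0\<close> by (simp_all add: x1_xm_y1_ym_def P1_Q1_Pm_Qm_def field_simps power2_eq_square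
        power3_eq_cube)
  have "(R/2) * (x1 * (c + R^2 * b)) \<le> 0" "(R/2) * (xm * (c + R^2 * b)) \<ge> 0"
    using neg1 negm unfolding s1 sm by (simp_all add: algebra_simps)
  then have "x1 * (c + R^2 * b) \<le> 0" "xm * (c + R^2 * b) \<ge> 0"
    using \<open>R > 0\<close> by (simp_all add: mult_le_0_iff zero_le_mult_iff)
  show False
  proof (cases "c + R^2 * b > 0")
    case True
    then have "x1 \<le> 0" "0 \<le> xm" "4 * (c + R^2 * b) / R > 0"
      using \<open>x1 * _ \<le> 0\<close> \<open>xm * _ \<ge> 0\<close> \<open>R > 0\<close> by (simp_all add: mult_le_0_iff zero_le_mult_iff)
    moreover have "ym < y1" using y \<open>4 * (c + R^2 * b) / R > 0\<close> by linarith
    ultimately show False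
      using product_bound_of_boxes[OF \<open>k > 1\<close> _ _ box1 boxm] id by simp
  next
    case False
    then have "c + R^2 * b < 0" using L by simp
    then have "xm \<le> 0" "0 \<le> x1" "4 * (c + R^2 * b) / R < 0"
      using \<open>x1 * _ \<le> 0\<close> \<open>xm * _ \<ge> 0\<close> \<open>R > 0\<close>
      by (simp_all add: mult_le_0_iff zero_le_mult_iff divide_less_0_iff)
    moreover have "y1 < ym" using y \<open>4 * (c + R^2 * b) / R < 0\<close> by linarith
    ultimately show False
      using product_bound_of_boxes[OF \<open>k > 1\<close> _ _ boxm box1] id by (simp add: mult.commute)
  qed
qed

lemma det_Pmat':
  assumes "e * e = 1" "R \<noteq> 0"
  shows "det (Pmat' R e t) = 1"
proof -
  have "det (Pmat' R e t) = 1 + (e*e - 1) * t^2"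
    using assms(2) by (simp add: Pmat'_def det_mk2 field_simps power2_eq_square)
  with assms(1) show ?thesis by simp
qed

lemma Pmat'_curve_meets_SQ_ell:
  fixes R a b c d e :: real
  assumes R: "R > 1" and det: "a*d - b*c = 1" and e: "e * e = 1"
    and sum: "\<bar>(a*R + e*b) + (d/R + e*c)\<bar> < R + 1/R"
    and diff: "\<bar>(a*R + e*b) - (d/R + e*c)\<bar> < R - 1/R"
    and sign: "(c - R^2*b + e*(d/R - a*R^3)) * (c + R^2*b) < 0"
  shows "meets_transversely (\<lambda>t. mk2 a b c d ** Pmat' R e t) {0<..} (SQ_ell R)"
proof -
  have "R \<noteq> 0" using R by simp
  define z where "z = d/R"
  have d: "d = z * R" using \<open>R \<noteq> 0\<close> by (simp add: z_def)
  define s L where "s = c - R^2*b + e*(z - a*R^3)" and "L = c + R^2*b"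
  have "s * L < 0" using sign by (simp add: s_def L_def z_def)
  then have "s \<noteq> 0" by auto
  define t\<^sub>0 where "t\<^sub>0 = -L/s"
  have "t\<^sub>0 > 0" using \<open>s * L < 0\<close> by (auto simp: t\<^sub>0_def mult_less_0_iff divide_less_0_iff)
  have st: "s * t\<^sub>0 = -L" using \<open>s \<noteq> 0\<close> by (simp add: t\<^sub>0_def)
  define W where "W = mk2 (a + e*b/R) (-(b + e*a*R)) (c + e*d/R) (-(d + e*c*R))"
  have curve: "(\<lambda>t. mk2 a b c d ** Pmat' R e t) = (\<lambda>t. mk2 a b c d + t *\<^sub>R W)"
    using \<open>R \<noteq> 0\<close> by (simp add: Pmat'_def W_def mk2_mult_mk2 mk2_add_scaleR field_simps)
  define al be ga de where "al = a + t\<^sub>0*(a + e*b/R)" and "be = b - t\<^sub>0*(b + e*a*R)"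
    and "ga = c + t\<^sub>0*(c + e*d/R)" and "de = d - t\<^sub>0*(d + e*c*R)"
  have point: "mk2 a b c d + t\<^sub>0 *\<^sub>R W = mk2 al be ga de"
    by (simp add: W_def mk2_add_scaleR al_def be_def ga_def de_def algebra_simps)
  have "det (mk2 a b c d ** Pmat' R e t\<^sub>0) = 1"
    using det det_Pmat'[OF e \<open>R \<noteq> 0\<close>] by (simp add: det_mul det_mk2)
  then have det_point: "al*de - be*ga = 1" by (metis curve point det_mk2)
  have "ga + R^2*be = L + t\<^sub>0 * s"
    using \<open>R \<noteq> 0\<close>
    by (simp add: al_def be_def ga_def de_def s_def L_def d field_simps power2_eq_square
        power3_eq_cube)
  then have hyperplane_point: "ga = -(R^2 * be)" using st by (simp add: algebra_simps)
  have "a * (z*R) - b*c = 1" using det d by simp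
  then have "s*al*R = e * (1 - R^2 * (a*R + e*b)^2)"
      "s*de = e * R * ((d/R + e*c)^2 - R^2)"
      "s*be = (a*R + e*b) * (d/R + e*c) - 1"
    using e st \<open>R \<noteq> 0\<close> unfolding al_def be_def ga_def de_def d s_def L_def
    by (simp_all add: field_simps) algebra+
  note inequalities = SQ_ell_inequalities[OF R sum diff \<open>s \<noteq> 0\<close> e this]
  have "mk2 al be ga de \<in> SQ_ell R"
    using SQ_ell_memberI[OF _ det_point hyperplane_point inequalities] R by simp
  moreover have "linear (\<lambda>A::mat2. A$2$1 + R^2 * A$1$2)" by (simp add: linear_iff algebra_simps)
  moreover have "W$2$1 + R^2 * W$1$2 = s"
    using \<open>R \<noteq> 0\<close> by (simp add: W_def s_def d field_simps power2_eq_square power3_eq_cube)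
  ultimately show ?thesis
    unfolding curve using meets_transversely_affine[of "\<lambda>A. A$2$1 + R^2 * A$1$2" "SQ_ell R" W]
      SQ_ell_hyperplane[OF \<open>R \<noteq> 0\<close>] \<open>s \<noteq> 0\<close> \<open>t\<^sub>0 > 0\<close> point by force
qed

lemma meets_set_inv_SQ_ell'_of_transpose:
  assumes "e * e = 1" "R > 0"
    and "meets_transversely (\<lambda>t. transpose h ** Pmat' R e t) I (SQ_ell R)"
  shows "meets_transversely (\<lambda>t. matrix_inv (Pmat R e t) ** h) I (set_inv (SQ_ell' R))"
proof -
  have "linear (transpose :: mat2 \<Rightarrow> mat2)" by (simp add: linear_iff vec_eq_iff transpose_def)
  from meets_transversely_linear_image[OF this this transpose_transpose assms(3)]
  have "meets_transversely (\<lambda>t. transpose (transpose h ** Pmat' R e t)) I (transpose ` SQ_ell R)" .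
  moreover have "transpose (transpose h ** Pmat' R e t) = matrix_inv (Pmat R e t) ** h" for t
    using assms(1,2) by (simp add: matrix_transpose_mul matrix_inv_Pmat)
  ultimately show ?thesis using set_inv_SQ_ell'[OF assms(2)] by simp
qed

lemma Pmat'_curve_meets_SQ_ell_for_some_sign:
  fixes R a b c d :: real
  assumes R: "R > 1" and det: "a * d - b * c = 1"
    and H: "\<forall>e \<in> {1, -1}. \<forall>e' \<in> {1, -1}.
           \<bar>a * R + e' * b + e * c + e * e' * d / R\<bar> < \<bar>R + e * e' / R\<bar>"
    and L: "c + R^2 * b \<noteq> 0"
  shows "\<exists>e \<in> {1, -1}. meets_transversely (\<lambda>t. mk2 a b c d ** Pmat' R e t) {0<..} (SQ_ell R)"
proof -
  have "R - 1/R > 0" using R mult_strict_mono[of 1 R 1 R] by (simp add: field_simps)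
  have bounds: "\<bar>(a*R + e*b) + (d/R + e*c)\<bar> < R + 1/R"
      "\<bar>(a*R + e*b) - (d/R + e*c)\<bar> < R - 1/R" if "e \<in> {1, -1}" for e
    using that H \<open>R - 1/R > 0\<close> R by (auto simp: algebra_simps)
  from crossing_sign_exists[OF R det bounds(2)[of 1, simplified] bounds(2)[of "-1", simplified] L]
  obtain e where "e \<in> {1, -1}" and "(c - R^2 * b + e * (d/R - a * R^3)) * (c + R^2 * b) < 0"
    by blast
  moreover have "e * e = 1" using \<open>e \<in> {1, -1}\<close> by auto
  ultimately show ?thesis
    using Pmat'_curve_meets_SQ_ell[OF R det _ bounds] by blast
qed

theorem mainTheorem15:
  fixes R a b c d :: real
  assumes "R > 1"
    and "a * d - b * c = 1"
    and "\<forall>e \<in> {1, -1}. \<forall>e' \<in> {1, -1}.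
           \<bar>a * R + e' * b + e * c + e * e' * d / R\<bar> < \<bar>R + e * e' / R\<bar>"
    and "b \<noteq> 0 \<or> c \<noteq> 0"
  shows "(\<exists>e \<in> {1, -1}. meets_transversely (\<lambda>t. mk2 a b c d ** Pmat' R e t) {0<..} (SQ_ell R))
       \<or> (\<exists>e \<in> {1, -1}. meets_transversely (\<lambda>t. matrix_inv (Pmat R e t) ** mk2 a b c d) {0<..}
            (set_inv (SQ_ell' R)))"
proof (cases "c + R^2 * b = 0")
  case False
  then show ?thesis using Pmat'_curve_meets_SQ_ell_for_some_sign assms(1-3) by blast
next
  case True
  then have c: "c = - (R^2 * b)" by simp
  then have "b \<noteq> 0" using assms(4) by auto
  moreover have "b + R^2 * c = b * (1 - R^4)"
    unfolding c by (simp add: algebra_simps power2_eq_square power4_eq_xxxx)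
  moreover have "R^4 > 1" using assms(1) by (simp add: one_less_power)
  ultimately have "b + R^2 * c \<noteq> 0" by simp
  moreover have "\<forall>e \<in> {1, -1}. \<forall>e' \<in> {1, -1}.
      \<bar>a * R + e' * c + e * b + e * e' * d / R\<bar> < \<bar>R + e * e' / R\<bar>"
    using assms(3) by (auto simp: algebra_simps)
  ultimately obtain e where "e \<in> {1, -1}"
    "meets_transversely (\<lambda>t. transpose (mk2 a b c d) ** Pmat' R e t) {0<..} (SQ_ell R)"
    using Pmat'_curve_meets_SQ_ell_for_some_sign[of R a d c b] assms(1,2)
    by (auto simp: transpose_mk2 algebra_simps)
  then show ?thesis using meets_set_inv_SQ_ell'_of_transpose[of e R] assms(1) by auto
qed

end
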